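(* Fix $\beta_1,\beta_2\in(0,\infty)$, $\bar p\in(0,1)$ and set $p_0:=\frac{\bar p}{\bar p+(1-\bar p)\exp(-2d\beta_1)}\in(0,1)$. Then for any finite $\Lambda\subseteq\mathbb{Z}^d_n$ and any $m\in\mathbb{Z}^\Lambda$, $$\langle\cos(m\theta)\rangle_{\mu_{\Lambda,\beta_1,\beta_2,\kappa}}\leq\mathbb{E}_{p_0}\big[\langle\cos(m\theta)\rangle_{\mu_{\Lambda,\beta_1,\beta_2,r}}\big],$$ where $\kappa=\kappa(\bar p)$.
   Context: Fix $n\in\mathbb{N}$. $\mathbb{Z}^d_n$ is the graph obtained from $\mathbb{Z}^d$ by adding $n$ vertices on each edge; vertices of $\mathbb{Z}^d$ are identified with the corresponding vertices of $\mathbb{Z}^d_n$, and $x\sim_n y$ denotes adjacency in $\mathbb{Z}^d_n$. $m\theta:=\sum_{x\in\Lambda}m_x\theta_x$. For $r\in\{0,1\}^\Lambda$ and $\theta\in[0,2\pi)^\Lambda$, $H_{\Lambda,\beta_1,\beta_2}(r,\theta)=-\beta_1\sum_{x\sim_n y,\,x,y\in\Lambda,\,\{x,y\}\cap\mathbb{Z}^d\neq\emptyset}r_xr_y\cos(\theta_x-\theta_y)-\beta_2\sum_{x\sim_n y,\,x,y\in\Lambda,\,\{x,y\}\cap\mathbb{Z}^d=\emptyset}r_xr_y\cos(\theta_x-\theta_y)$. Quenched measure: $\mu_{\Lambda,\beta_1,\beta_2,r}(d\theta)=Z^{-1}e^{-H_{\Lambda,\beta_1,\beta_2}(r,\theta)}\prod_{x\in\Lambda}d\theta_x$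 ($d\theta_x$ uniform on $[0,2\pi)$). Let $\kappa(\bar p)=(\kappa_x)$ with $\kappa_x=(1-\bar p)\delta_0+\bar p\delta_1$ for $x\in\mathbb{Z}^d$ and $\kappa_x=\delta_1$ for $x\in\mathbb{Z}^d_n\setminus\mathbb{Z}^d$; annealed measure: $\mu_{\Lambda,\beta_1,\beta_2,\kappa}(dr\,d\theta)=Z^{-1}e^{-H_{\Lambda,\beta_1,\beta_2}(r,\theta)}\prod_{x\in\Lambda}d\kappa_x(r_x)d\theta_x$. $\mathbb{P}_{\Lambda,p}$ is the product measure on $\{0,1\}^\Lambda$ with $\mathbb{P}(r_x=1)=p$ for $x\in\Lambda\cap\mathbb{Z}^d$ and $\mathbb{P}(r_x=1)=1$ for $x\in\Lambda\setminus\mathbb{Z}^d$; $\mathbb{E}_p$ is its expectation. *)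

theory Defs
  imports "HOL-Probability.Probability"
begin

text \<open>Model of the decorated lattice Z^d_n: Z^d is the type 'd => int with 'd finite,
  d = CARD('d). Z^d_n is realised inside Z^d scaled by (n+1): the original vertex x
  of Z^d corresponds to (n+1) x, and the n added vertices on the edge {x, x+e_i}
  are (n+1) x + k e_i, k = 1..n.\<close>

definition Zd_vert :: "nat \<Rightarrow> ('d::finite \<Rightarrow> int) set" where
  "Zd_vert n = {v. \<forall>i. int (n + 1) dvd v i}"

definition Zdn_vert :: "nat \<Rightarrow> ('d::finite \<Rightarrow> int) set" where
  "Zdn_vert n = {v. card {i. \<not> int (n + 1) dvd v i} \<le> 1}"

definition adj_n :: "nat \<Rightarrow> ('d::finite \<Rightarrow> int) \<Rightarrow> ('d \<Rightarrow> int) \<Rightarrow> bool" where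
  "adj_n n v w \<longleftrightarrow> v \<in> Zdn_vert n \<and> w \<in> Zdn_vert n \<and> (\<Sum>i\<in>UNIV. \<bar>v i - w i\<bar>) = 1"

text \<open>Hamiltonian; the sum over unordered edges {x,y} is written as half the sum over
  ordered adjacent pairs.\<close>
definition hamiltonian ::
  "nat \<Rightarrow> ('d::finite \<Rightarrow> int) set \<Rightarrow> real \<Rightarrow> real \<Rightarrow> (('d \<Rightarrow> int) \<Rightarrow> real)
     \<Rightarrow> (('d \<Rightarrow> int) \<Rightarrow> real) \<Rightarrow> real" where
  "hamiltonian n \<Lambda> \<beta>1 \<beta>2 r \<theta> =
     - (1/2) * (\<Sum>x\<in>\<Lambda>. \<Sum>y\<in>\<Lambda>.
         if adj_n n x y then
           (if x \<in> Zd_vert n \<or> y \<in> Zd_vert n then \<beta>1 else \<beta>2) * r x * r y * cos (\<theta> x - \<theta> y)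
         else 0)"

definition angle_measure :: "('d::finite \<Rightarrow> int) set \<Rightarrow> (('d \<Rightarrow> int) \<Rightarrow> real) measure" where
  "angle_measure \<Lambda> = PiM \<Lambda> (\<lambda>_. uniform_measure lborel {0..<2*pi})"

definition mdot :: "('d::finite \<Rightarrow> int) set \<Rightarrow> (('d \<Rightarrow> int) \<Rightarrow> int) \<Rightarrow> (('d \<Rightarrow> int) \<Rightarrow> real) \<Rightarrow> real" where
  "mdot \<Lambda> m \<theta> = (\<Sum>x\<in>\<Lambda>. real_of_int (m x) * \<theta> x)"

definition quenched_avg ::
  "nat \<Rightarrow> ('d::finite \<Rightarrow> int) set \<Rightarrow> real \<Rightarrow> real \<Rightarrow> (('d \<Rightarrow> int) \<Rightarrow> real)
     \<Rightarrow> ((('d \<Rightarrow> int) \<Rightarrow> real) \<Rightarrow> real) \<Rightarrow> real" where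
  "quenched_avg n \<Lambda> \<beta>1 \<beta>2 r f =
     (\<integral>\<theta>. f \<theta> * exp (- hamiltonian n \<Lambda> \<beta>1 \<beta>2 r \<theta>) \<partial>angle_measure \<Lambda>) /
     (\<integral>\<theta>. exp (- hamiltonian n \<Lambda> \<beta>1 \<beta>2 r \<theta>) \<partial>angle_measure \<Lambda>)"

definition configs :: "nat \<Rightarrow> ('d::finite \<Rightarrow> int) set \<Rightarrow> (('d \<Rightarrow> int) \<Rightarrow> real) set" where
  "configs n \<Lambda> = PiE \<Lambda> (\<lambda>x. if x \<in> Zd_vert n then {0, 1} else {1})"

text \<open>Product Bernoulli weight: kappa(p) / P_{Lambda,p} of a configuration.\<close>
definition bern_weight :: "nat \<Rightarrow> ('d::finite \<Rightarrow> int) set \<Rightarrow> real \<Rightarrow> (('d \<Rightarrow> int) \<Rightarrow> real) \<Rightarrow> real" where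
  "bern_weight n \<Lambda> p r = (\<Prod>x\<in>\<Lambda> \<inter> Zd_vert n. if r x = 1 then p else 1 - p)"

text \<open>Annealed expectation of f under mu_{Lambda,beta1,beta2,kappa(pbar)}.\<close>
definition annealed_avg ::
  "nat \<Rightarrow> ('d::finite \<Rightarrow> int) set \<Rightarrow> real \<Rightarrow> real \<Rightarrow> real
     \<Rightarrow> ((('d \<Rightarrow> int) \<Rightarrow> real) \<Rightarrow> real) \<Rightarrow> real" where
  "annealed_avg n \<Lambda> \<beta>1 \<beta>2 pbar f =
     (\<Sum>r\<in>configs n \<Lambda>. bern_weight n \<Lambda> pbar r *
        (\<integral>\<theta>. f \<theta> * exp (- hamiltonian n \<Lambda> \<beta>1 \<beta>2 r \<theta>) \<partial>angle_measure \<Lambda>)) /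
     (\<Sum>r\<in>configs n \<Lambda>. bern_weight n \<Lambda> pbar r *
        (\<integral>\<theta>. exp (- hamiltonian n \<Lambda> \<beta>1 \<beta>2 r \<theta>) \<partial>angle_measure \<Lambda>))"

definition dil_expect :: "nat \<Rightarrow> ('d::finite \<Rightarrow> int) set \<Rightarrow> real \<Rightarrow> ((('d \<Rightarrow> int) \<Rightarrow> real) \<Rightarrow> real) \<Rightarrow> real" where
  "dil_expect n \<Lambda> p g = (\<Sum>r\<in>configs n \<Lambda>. bern_weight n \<Lambda> p r * g r)"

end

(*
  Raising the occupation variables r adds ferromagnetic couplings, i.e. a cosine polynomial with
  nonnegative coefficients, to -H, so by Ginibre's inequality the quenched correlation
  <cos (m theta)>_r is increasing in r. Occupying a vacant site x of Z^d raises -H by at most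
  beta1 on each of the at most 2d bonds at x, so the partition function grows by at most
  exp (2 d beta1). Under the annealed weight P_pbar(r) Z_r the odds that x is occupied, given the
  rest of r, are therefore at most exp (2 d beta1) pbar / (1 - pbar) = p0 / (1 - p0). A weight
  with these conditional odds is dominated by the Bernoulli product measure P_p0, and averaging
  the increasing function r |-> <cos (m theta)>_r against both measures gives the inequality.

  Ginibre's inequality is proved by duplicating the angles: the difference of the two sides is an
  integral over two replicas (theta, theta') of a limit of polynomials in the functions
  cos (k theta) +- cos (k theta'), and every monomial in these has a nonnegative integral, equal
  to a power of 1/2 times a square.
*)

theory Submission
  imports Defs
begin

section \<open>Fourier analysis on the torus\<close>

definition angle_unif :: "real measure" where
  "angle_unif = uniform_measure lborel {0..<2*pi}"

abbreviation torus :: "'i set \<Rightarrow> ('i \<Rightarrow> real) measure" where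
  "torus I \<equiv> PiM I (\<lambda>_. angle_unif)"

abbreviation torus2 :: "'i set \<Rightarrow> (('i \<Rightarrow> real) \<times> ('i \<Rightarrow> real)) measure" where
  "torus2 I \<equiv> torus I \<Otimes>\<^sub>M torus I"

definition lin_form :: "'i set \<Rightarrow> ('i \<Rightarrow> int) \<Rightarrow> ('i \<Rightarrow> real) \<Rightarrow> real" where
  "lin_form I u \<theta> = (\<Sum>x\<in>I. of_int (u x) * \<theta> x)"

lemma prob_space_angle_unif: "prob_space angle_unif"
  unfolding angle_unif_def by (rule prob_space_uniform_measure) auto

lemma sets_angle_unif [measurable_cong, simp]: "sets angle_unif = sets borel"
  unfolding angle_unif_def by simp

lemma space_angle_unif [simp]: "space angle_unif = UNIV"
  unfolding angle_unif_def by simp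

interpretation torus: product_prob_space "\<lambda>_. angle_unif" I for I
  by (intro product_prob_space.intro product_sigma_finite.intro product_prob_space_axioms.intro
      prob_space_imp_sigma_finite prob_space_angle_unif)

interpretation torus2: pair_prob_space "torus I" "torus I" for I
  by (intro pair_prob_space.intro pair_sigma_finite.intro torus.P.prob_space_axioms
      prob_space_imp_sigma_finite)

lemma lin_form_measurable [measurable]: "lin_form I u \<in> borel_measurable (torus I)"
  unfolding lin_form_def by measurable

lemma lin_form_add: "lin_form I (\<lambda>x. u x + v x) \<theta> = lin_form I u \<theta> + lin_form I v \<theta>"
  unfolding lin_form_def by (simp add: sum.distrib algebra_simps)

lemma lin_form_diff: "lin_form I (\<lambda>x. u x - v x) \<theta> = lin_form I u \<theta> - lin_form I v \<theta>"
  unfolding lin_form_def by (simp add: sum_subtractf algebra_simps)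

lemma lin_form_zero [simp]: "lin_form I (\<lambda>_. 0) \<theta> = 0"
  unfolding lin_form_def by simp

lemma lin_form_insert_upd:
  assumes "finite I" "i \<notin> I"
  shows "lin_form (insert i I) u (\<theta>(i := y)) = of_int (u i) * y + lin_form I u \<theta>"
  unfolding lin_form_def using assms by (auto intro!: sum.cong)

lemma integral_angle_unif:
  fixes f :: "real \<Rightarrow> real"
  assumes [measurable]: "f \<in> borel_measurable borel"
  shows "integral\<^sup>L angle_unif f = (\<integral>x. indicator {0..2*pi} x * f x \<partial>lborel) / (2*pi)"
proof -
  have density: "angle_unif = density lborel (\<lambda>x. ennreal (indicator {0..<2*pi} x / (2*pi)))"
    unfolding angle_unif_def uniform_measure_def
    by (intro density_cong) (auto simp: indicator_def divide_ennreal[symmetric])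
  have "integral\<^sup>L angle_unif f = (\<integral>x. (indicator {0..<2*pi} x / (2*pi)) *\<^sub>R f x \<partial>lborel)"
    unfolding density by (rule integral_density) auto
  also have "\<dots> = (\<integral>x. (indicator {0..2*pi} x * f x) / (2*pi) \<partial>lborel)"
    by (intro integral_cong_AE) (auto intro!: eventually_mono[OF AE_lborel_singleton[of "2*pi"]]
        simp: indicator_def)
  finally show ?thesis by simp
qed

lemma integral_angle_unif_cos:
  "(\<integral>y. cos (C + of_int k * y) \<partial>angle_unif) = (if k = 0 then cos C else 0)"
proof (cases "k = 0")
  case True
  then show ?thesis by (subst integral_angle_unif) auto
next
  case False
  have "(\<integral>x. indicator {0..2*pi} x *\<^sub>R cos (C + of_int k * x) \<partial>lborel)
      = sin (C + of_int k * (2*pi)) / k - sin (C + of_int k * 0) / k"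
    using False
    by (intro integral_FTC_atLeastAtMost)
       (auto intro!: derivative_eq_intros continuous_intros
         simp: has_real_derivative_iff_has_vector_derivative[symmetric])
  moreover have "sin (C + of_int k * (2*pi)) = sin C"
    using sin_int_2pin[of k] cos_int_2pin[of k] by (simp only: sin_add mult.commute)
  ultimately show ?thesis using False by (subst integral_angle_unif) auto
qed

lemma integral_torus_cos:
  assumes "finite I"
  shows "(\<integral>\<theta>. cos (C + lin_form I u \<theta>) \<partial>torus I) = (if \<forall>x\<in>I. u x = 0 then cos C else 0)"
  using assms
proof (induction I arbitrary: C rule: finite_induct)
  case empty
  then show ?case by (simp add: lin_form_def torus.P.prob_space)
next
  case (insert i I)
  have "(\<integral>\<theta>. cos (C + lin_form (insert i I) u \<theta>) \<partial>torus (insert i I))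
      = (\<integral>\<theta>. (\<integral>y. cos ((C + lin_form I u \<theta>) + of_int (u i) * y) \<partial>angle_unif) \<partial>torus I)"
    by (subst torus.product_integral_insert[OF insert(1,2)])
       (auto intro!: torus.integrable_const_bound[where B=1] simp: lin_form_insert_upd[OF insert(1,2)] ac_simps)
  also have "\<dots> = (\<integral>\<theta>. (if u i = 0 then cos (C + lin_form I u \<theta>) else 0) \<partial>torus I)"
    by (simp only: integral_angle_unif_cos)
  also have "\<dots> = (if \<forall>x\<in>insert i I. u x = 0 then cos C else 0)"
    using insert(3)[of C] by (cases "u i = 0"; simp only: if_True if_False; simp)
  finally show ?case .
qed

lemma integral_torus2_cos:
  assumes "finite I"
  shows "(\<integral>z. cos (lin_form I u (fst z) + lin_form I v (snd z)) \<partial>torus2 I)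
    = (if (\<forall>x\<in>I. u x = 0) \<and> (\<forall>x\<in>I. v x = 0) then 1 else 0)"
proof -
  have "(\<integral>z. cos (lin_form I u (fst z) + lin_form I v (snd z)) \<partial>torus2 I)
      = (\<integral>\<theta>. (\<integral>\<theta>'. cos (lin_form I u \<theta> + lin_form I v \<theta>') \<partial>torus I) \<partial>torus I)"
    by (subst torus2.integral_fst) (auto intro!: torus2.integrable_const_bound[where B=1] simp: case_prod_beta')
  also have "\<dots> = (\<integral>\<theta>. (if \<forall>x\<in>I. v x = 0 then cos (lin_form I u \<theta>) else 0) \<partial>torus I)"
    by (simp only: integral_torus_cos[OF assms])
  also have "\<dots> = (if (\<forall>x\<in>I. u x = 0) \<and> (\<forall>x\<in>I. v x = 0) then 1 else 0)"
    using integral_torus_cos[OF assms, of 0 u] by (cases "\<forall>x\<in>I. v x = 0"; simp only: if_True if_False; simp)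
  finally show ?thesis .
qed

section \<open>The Ginibre cone\<close>

definition cos_pair :: "'i set \<Rightarrow> ('i \<Rightarrow> int) \<Rightarrow> real \<Rightarrow> ('i \<Rightarrow> real) \<times> ('i \<Rightarrow> real) \<Rightarrow> real" where
  "cos_pair I k \<sigma> z = cos (lin_form I k (fst z)) + \<sigma> * cos (lin_form I k (snd z))"

definition cos_pair_prod ::
    "'i set \<Rightarrow> (('i \<Rightarrow> int) \<times> real) list \<Rightarrow> ('i \<Rightarrow> real) \<times> ('i \<Rightarrow> real) \<Rightarrow> real" where
  "cos_pair_prod I L z = prod_list (map (\<lambda>(k, \<sigma>). cos_pair I k \<sigma> z) L)"

fun pair_coeff :: "'i set \<Rightarrow> (('i \<Rightarrow> int) \<times> real) list \<Rightarrow> ('i \<Rightarrow> int) \<Rightarrow> real" where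
  "pair_coeff I [] w = (if \<forall>x\<in>I. w x = 0 then 1 else 0)"
| "pair_coeff I ((k, \<sigma>) # L) w = pair_coeff I L (\<lambda>x. w x + k x) + \<sigma> * pair_coeff I L (\<lambda>x. w x - k x)"

abbreviation unit_signs :: "(('i \<Rightarrow> int) \<times> real) list \<Rightarrow> bool" where
  "unit_signs L \<equiv> \<forall>(k, \<sigma>)\<in>set L. \<sigma> \<in> {1, -1}"

lemma cos_pair_measurable [measurable]: "cos_pair I k \<sigma> \<in> borel_measurable (torus2 I)"
  unfolding cos_pair_def by measurable

lemma cos_pair_prod_Nil [simp]: "cos_pair_prod I [] z = 1"
  by (simp add: cos_pair_prod_def)

lemma cos_pair_prod_Cons [simp]: "cos_pair_prod I ((k, \<sigma>) # L) z = cos_pair I k \<sigma> z * cos_pair_prod I L z"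
  by (simp add: cos_pair_prod_def)

lemma cos_pair_prod_measurable [measurable]: "cos_pair_prod I L \<in> borel_measurable (torus2 I)"
  by (induction L) (auto simp: cos_pair_prod_def)

lemma abs_cos_pair_le:
  assumes "\<bar>\<sigma>\<bar> \<le> 1"
  shows "\<bar>cos_pair I k \<sigma> z\<bar> \<le> 2"
proof -
  have "\<bar>\<sigma> * cos (lin_form I k (snd z))\<bar> \<le> 1"
    using assms by (simp add: abs_mult mult_le_one)
  then show ?thesis
    using abs_triangle_ineq[of "cos (lin_form I k (fst z))" "\<sigma> * cos (lin_form I k (snd z))"]
      abs_cos_le_one[of "lin_form I k (fst z)"]
    unfolding cos_pair_def by linarith
qed

lemma abs_cos_pair_prod_le:
  assumes "unit_signs L"
  shows "\<bar>cos_pair_prod I L z\<bar> \<le> 2 ^ length L"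
  using assms
proof (induction L)
  case (Cons a L)
  obtain k \<sigma> where a: "a = (k, \<sigma>)" by force
  have "\<bar>cos_pair I k \<sigma> z\<bar> \<le> 2"
    using Cons.prems a by (intro abs_cos_pair_le) auto
  with Cons show ?case by (auto simp: a abs_mult intro: mult_mono)
qed simp

lemma integrable_cos_pair_prod:
  assumes "unit_signs L" "f \<in> borel_measurable (torus2 I)" "\<And>z. \<bar>f z\<bar> \<le> B"
  shows "integrable (torus2 I) (\<lambda>z. f z * cos_pair_prod I L z)"
proof (rule torus2.integrable_const_bound[where B="B * 2 ^ length L"])
  show "AE z in torus2 I. norm (f z * cos_pair_prod I L z) \<le> B * 2 ^ length L"
    using assms abs_cos_pair_prod_le[OF assms(1)] by (auto simp: abs_mult intro!: mult_mono')
qed (use assms in measurable)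

lemma cos_mult_cos_pair_expand:
  fixes S A B \<sigma> :: real
  shows "cos S * (cos A + \<sigma> * cos B)
    = (cos (S + A) + cos (S - A)) / 2 + \<sigma> * (cos (S + B) + cos (S - B)) / 2"
  by (simp add: cos_add cos_diff algebra_simps)

text \<open>Each factor turns cos (u \<theta> + v \<theta>') into four shifted cosines; the recursion of
  pair_coeff records the shifts of u + v and of u - v separately.\<close>
lemma integral_cos_mult_cos_pair_prod:
  assumes "finite I" "unit_signs L"
  shows "(\<integral>z. cos (lin_form I u (fst z) + lin_form I v (snd z)) * cos_pair_prod I L z \<partial>torus2 I)
    = (1/2) ^ length L * pair_coeff I L (\<lambda>x. u x + v x) * pair_coeff I L (\<lambda>x. u x - v x)"
  using assms(2)
proof (induction L arbitrary: u v)
  case Nil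
  have "(\<forall>x\<in>I. u x + v x = 0) \<and> (\<forall>x\<in>I. u x - v x = 0) \<longleftrightarrow> (\<forall>x\<in>I. u x = 0) \<and> (\<forall>x\<in>I. v x = 0)"
    by auto
  then show ?case using integral_torus2_cos[OF assms(1), of u v] by simp
next
  case (Cons a L)
  obtain k \<sigma> where a: "a = (k, \<sigma>)" by force
  have \<sigma>: "\<sigma> = 1 \<or> \<sigma> = -1" and L: "unit_signs L" using Cons.prems a by auto
  define G where "G u v z = cos (lin_form I u (fst z) + lin_form I v (snd z)) * cos_pair_prod I L z" for u v z
  have int_G: "integrable (torus2 I) (G u v)" for u v
    unfolding G_def by (rule integrable_cos_pair_prod[OF L, where B=1]) auto
  have IH: "integral\<^sup>L (torus2 I) (G u v)
      = (1/2) ^ length L * pair_coeff I L (\<lambda>x. u x + v x) * pair_coeff I L (\<lambda>x. u x - v x)" for u v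
    unfolding G_def using Cons.IH[OF L] .
  have "cos (lin_form I u (fst z) + lin_form I v (snd z)) * cos_pair_prod I (a # L) z
     = (G (\<lambda>x. u x + k x) v z + G (\<lambda>x. u x - k x) v z) / 2
       + \<sigma> * (G u (\<lambda>x. v x + k x) z + G u (\<lambda>x. v x - k x) z) / 2" for z
  proof -
    let ?S = "lin_form I u (fst z) + lin_form I v (snd z)"
    have "lin_form I (\<lambda>x. u x + k x) (fst z) + lin_form I v (snd z) = ?S + lin_form I k (fst z)"
      "lin_form I (\<lambda>x. u x - k x) (fst z) + lin_form I v (snd z) = ?S - lin_form I k (fst z)"
      "lin_form I u (fst z) + lin_form I (\<lambda>x. v x + k x) (snd z) = ?S + lin_form I k (snd z)"
      "lin_form I u (fst z) + lin_form I (\<lambda>x. v x - k x) (snd z) = ?S - lin_form I k (snd z)"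
      by (simp_all add: lin_form_add lin_form_diff)
    then show ?thesis
      unfolding G_def a cos_pair_prod_Cons mult.assoc[symmetric] cos_pair_def cos_mult_cos_pair_expand
      by (simp only:) (simp add: ring_distribs add_divide_distrib)
  qed
  then have "(\<integral>z. cos (lin_form I u (fst z) + lin_form I v (snd z)) * cos_pair_prod I (a # L) z \<partial>torus2 I)
     = (integral\<^sup>L (torus2 I) (G (\<lambda>x. u x + k x) v) + integral\<^sup>L (torus2 I) (G (\<lambda>x. u x - k x) v)) / 2
       + \<sigma> * (integral\<^sup>L (torus2 I) (G u (\<lambda>x. v x + k x)) + integral\<^sup>L (torus2 I) (G u (\<lambda>x. v x - k x))) / 2"
    by (simp add: int_G)
  also have "\<dots> = (1/2) ^ length (a # L) * pair_coeff I (a # L) (\<lambda>x. u x + v x) * pair_coeff I (a # L) (\<lambda>x. u x - v x)"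
    unfolding IH a using \<sigma> by (elim disjE) (simp_all add: field_simps)
  finally show ?case .
qed

lemma integral_cos_pair_prod_nonneg:
  assumes "finite I" "unit_signs L"
  shows "0 \<le> (\<integral>z. cos_pair_prod I L z \<partial>torus2 I)"
proof -
  have "(\<integral>z. cos_pair_prod I L z \<partial>torus2 I) = (1/2) ^ length L * (pair_coeff I L (\<lambda>_. 0))\<^sup>2"
    using integral_cos_mult_cos_pair_prod[OF assms, of "\<lambda>_. 0" "\<lambda>_. 0"] by (simp add: power2_eq_square)
  then show ?thesis by simp
qed

inductive_set ginibre_cone :: "'i set \<Rightarrow> ((('i \<Rightarrow> real) \<times> ('i \<Rightarrow> real)) \<Rightarrow> real) set" for I where
  ginibre_cone_const: "0 \<le> c \<Longrightarrow> (\<lambda>_. c) \<in> ginibre_cone I"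
| ginibre_cone_add: "f \<in> ginibre_cone I \<Longrightarrow> g \<in> ginibre_cone I \<Longrightarrow> (\<lambda>z. f z + g z) \<in> ginibre_cone I"
| ginibre_cone_mult_cos_pair:
    "\<sigma> \<in> {1, -1} \<Longrightarrow> f \<in> ginibre_cone I \<Longrightarrow> (\<lambda>z. cos_pair I k \<sigma> z * f z) \<in> ginibre_cone I"

lemma ginibre_cone_integral_mult_nonneg:
  assumes "finite I" "f \<in> ginibre_cone I" "unit_signs L"
  shows "integrable (torus2 I) (\<lambda>z. f z * cos_pair_prod I L z)
    \<and> 0 \<le> (\<integral>z. f z * cos_pair_prod I L z \<partial>torus2 I)"
  using assms(2,3)
proof (induction arbitrary: L rule: ginibre_cone.induct)
  case (ginibre_cone_const c)
  then show ?case
    using integrable_cos_pair_prod[of L "\<lambda>_. c" I c] integral_cos_pair_prod_nonneg[OF assms(1)] by simp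
next
  case (ginibre_cone_add f g)
  then show ?case by (simp add: distrib_right)
next
  case (ginibre_cone_mult_cos_pair \<sigma> f k)
  then have "unit_signs ((k, \<sigma>) # L)" by auto
  from ginibre_cone_mult_cos_pair.IH[OF this] show ?case by (simp add: ac_simps)
qed

corollary ginibre_cone_integral_nonneg:
  assumes "finite I" "f \<in> ginibre_cone I"
  shows "integrable (torus2 I) f" "0 \<le> integral\<^sup>L (torus2 I) f"
  using ginibre_cone_integral_mult_nonneg[OF assms, of "[]"] by simp_all

lemma ginibre_cone_scale:
  assumes "0 \<le> c"
  shows "f \<in> ginibre_cone I \<Longrightarrow> (\<lambda>z. c * f z) \<in> ginibre_cone I"
proof (induction rule: ginibre_cone.induct)
  case (ginibre_cone_const c')
  then show ?case using assms by (simp add: ginibre_cone.ginibre_cone_const)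
next
  case (ginibre_cone_mult_cos_pair \<sigma> f k)
  then have "(\<lambda>z. cos_pair I k \<sigma> z * (c * f z)) \<in> ginibre_cone I"
    by (intro ginibre_cone.intros)
  then show ?case by (simp add: mult.left_commute)
qed (auto simp: distrib_left intro: ginibre_cone.intros)

lemma ginibre_cone_mult:
  "f \<in> ginibre_cone I \<Longrightarrow> g \<in> ginibre_cone I \<Longrightarrow> (\<lambda>z. f z * g z) \<in> ginibre_cone I"
proof (induction f rule: ginibre_cone.induct)
  case (ginibre_cone_mult_cos_pair \<sigma> f k)
  then show ?case by (auto simp: mult.assoc intro: ginibre_cone.intros)
qed (auto simp: distrib_right intro: ginibre_cone.intros ginibre_cone_scale)

lemma ginibre_cone_power: "f \<in> ginibre_cone I \<Longrightarrow> (\<lambda>z. f z ^ k) \<in> ginibre_cone I"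
  by (induction k) (auto intro: ginibre_cone_mult ginibre_cone_const[of 1, simplified])

lemma ginibre_cone_poly:
  assumes "\<And>a. 0 \<le> c a" "f \<in> ginibre_cone I"
  shows "(\<lambda>z. \<Sum>a<N. c a * f z ^ a) \<in> ginibre_cone I"
proof (induction N)
  case 0
  then show ?case using ginibre_cone_const[of 0] by simp
next
  case (Suc N)
  then show ?case
    by (auto intro!: ginibre_cone_add ginibre_cone_scale ginibre_cone_power assms)
qed

inductive_set cos_poly :: "'i set \<Rightarrow> (('i \<Rightarrow> real) \<Rightarrow> real) set" for I where
  cos_poly_zero: "(\<lambda>_. 0) \<in> cos_poly I"
| cos_poly_cos: "0 \<le> c \<Longrightarrow> (\<lambda>\<theta>. c * cos (lin_form I k \<theta>)) \<in> cos_poly I"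
| cos_poly_add: "P \<in> cos_poly I \<Longrightarrow> Q \<in> cos_poly I \<Longrightarrow> (\<lambda>\<theta>. P \<theta> + Q \<theta>) \<in> cos_poly I"

lemma cos_poly_sum:
  assumes "finite A" "\<And>a. a \<in> A \<Longrightarrow> P a \<in> cos_poly I"
  shows "(\<lambda>\<theta>. \<Sum>a\<in>A. P a \<theta>) \<in> cos_poly I"
  using assms by (induction A rule: finite_induct) (auto intro: cos_poly.intros)

lemma cos_poly_measurable: "P \<in> cos_poly I \<Longrightarrow> P \<in> borel_measurable (torus I)"
  by (induction rule: cos_poly.induct) auto

lemma cos_poly_bounded: "P \<in> cos_poly I \<Longrightarrow> \<exists>B. \<forall>\<theta>. \<bar>P \<theta>\<bar> \<le> B"
proof (induction rule: cos_poly.induct)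
  case (cos_poly_cos c k)
  then have "\<bar>c * cos (lin_form I k \<theta>)\<bar> \<le> c" for \<theta>
    using mult_left_le[of "\<bar>cos (lin_form I k \<theta>)\<bar>" c] by (simp add: abs_mult)
  then show ?case by blast
next
  case (cos_poly_add P Q)
  then obtain B C where "\<forall>\<theta>. \<bar>P \<theta>\<bar> \<le> B" "\<forall>\<theta>. \<bar>Q \<theta>\<bar> \<le> C" by blast
  then have "\<bar>P \<theta> + Q \<theta>\<bar> \<le> B + C" for \<theta>
    by (meson abs_triangle_ineq add_mono order_trans)
  then show ?case by blast
qed auto

lemma cos_poly_doubled_in_ginibre_cone:
  assumes "P \<in> cos_poly I" "\<sigma> \<in> {1, -1}"
  shows "(\<lambda>z. P (fst z) + \<sigma> * P (snd z)) \<in> ginibre_cone I"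
  using assms(1)
proof (induction rule: cos_poly.induct)
  case cos_poly_zero
  then show ?case using ginibre_cone_const[of 0] by simp
next
  case (cos_poly_cos c k)
  have "(\<lambda>z. cos_pair I k \<sigma> z * c) \<in> ginibre_cone I"
    using assms(2) cos_poly_cos by (intro ginibre_cone_mult_cos_pair ginibre_cone_const)
  then show ?case by (simp add: cos_pair_def algebra_simps)
next
  case (cos_poly_add P Q)
  have "(\<lambda>z. (P (fst z) + \<sigma> * P (snd z)) + (Q (fst z) + \<sigma> * Q (snd z))) \<in> ginibre_cone I"
    using cos_poly_add.IH by (rule ginibre_cone_add)
  then show ?case by (simp add: algebra_simps)
qed

definition exp_partial :: "nat \<Rightarrow> real \<Rightarrow> real" where
  "exp_partial N x = (\<Sum>a<N. x ^ a / fact a)"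

lemma exp_partial_sums: "(\<lambda>a. x ^ a / fact a) sums exp (x :: real)"
  using exp_converges[of x] by (simp add: divide_inverse_commute real_scaleR_def)

lemma exp_partial_tendsto: "(\<lambda>N. exp_partial N x) \<longlonglongrightarrow> exp x"
  using exp_partial_sums[of x] unfolding sums_def exp_partial_def .

lemma abs_exp_partial_le: "\<bar>exp_partial N x\<bar> \<le> exp \<bar>x\<bar>"
proof -
  have "\<bar>exp_partial N x\<bar> \<le> (\<Sum>a<N. \<bar>x\<bar> ^ a / fact a)"
    unfolding exp_partial_def by (rule order_trans[OF sum_abs]) (simp add: abs_mult power_abs)
  also have "\<dots> \<le> (\<Sum>a. \<bar>x\<bar> ^ a / fact a)"
    by (rule sum_le_suminf) (use exp_partial_sums[of "\<bar>x\<bar>"] in \<open>auto simp: sums_iff\<close>)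
  also have "\<dots> = exp \<bar>x\<bar>"
    using exp_partial_sums[of "\<bar>x\<bar>"] by (simp add: sums_iff)
  finally show ?thesis .
qed

lemma exp_partial_odd_part: "exp_partial N x - exp_partial N (- x) = (\<Sum>a<N. ((1 - (-1) ^ a) / fact a) * x ^ a)"
  unfolding exp_partial_def sum_subtractf[symmetric]
  by (intro sum.cong refl) (simp add: power_minus[of x] field_simps)

lemma ginibre_cone_exp_partial: "f \<in> ginibre_cone I \<Longrightarrow> (\<lambda>z. exp_partial N (f z)) \<in> ginibre_cone I"
  unfolding exp_partial_def using ginibre_cone_poly[of "\<lambda>a. 1 / fact a" f]
  by (simp add: field_simps)

lemma ginibre_cone_exp_partial_odd:
  "f \<in> ginibre_cone I \<Longrightarrow> (\<lambda>z. exp_partial N (f z) - exp_partial N (- f z)) \<in> ginibre_cone I"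
  unfolding exp_partial_odd_part
  by (rule ginibre_cone_poly) (auto simp: minus_one_power_iff)

section \<open>Ginibre's inequality\<close>

lemma (in pair_prob_space) integrable_fst_mult_snd:
  fixes f g :: "_ \<Rightarrow> real"
  assumes [measurable]: "f \<in> borel_measurable M1" "g \<in> borel_measurable M2"
    and "\<And>x. \<bar>f x\<bar> \<le> B" "\<And>y. \<bar>g y\<bar> \<le> C"
  shows "integrable (M1 \<Otimes>\<^sub>M M2) (\<lambda>z. f (fst z) * g (snd z))"
  by (rule integrable_const_bound[where B="B * C"]) (auto simp: abs_mult intro!: mult_mono' assms)

lemma (in pair_prob_space) integral_fst_mult_snd:
  fixes f g :: "_ \<Rightarrow> real"
  assumes [measurable]: "f \<in> borel_measurable M1" "g \<in> borel_measurable M2"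
    and "\<And>x. \<bar>f x\<bar> \<le> B" "\<And>y. \<bar>g y\<bar> \<le> C"
  shows "(\<integral>z. f (fst z) * g (snd z) \<partial>(M1 \<Otimes>\<^sub>M M2)) = integral\<^sup>L M1 f * integral\<^sup>L M2 g"
proof -
  have "integrable (M1 \<Otimes>\<^sub>M M2) (\<lambda>(x, y). f x * g y)"
    using integrable_fst_mult_snd[OF assms] by (simp add: case_prod_beta')
  then have "(\<integral>x. (\<integral>y. f x * g y \<partial>M2) \<partial>M1) = (\<integral>(x, y). f x * g y \<partial>(M1 \<Otimes>\<^sub>M M2))"
    by (rule integral_fst)
  then show ?thesis by (simp add: case_prod_beta')
qed

lemma (in prob_space) integral_duplication:
  fixes a b w :: "'a \<Rightarrow> real"
  assumes [measurable]: "a \<in> borel_measurable M" "b \<in> borel_measurable M" "w \<in> borel_measurable M"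
    and bounds: "\<And>x. \<bar>a x\<bar> \<le> A" "\<And>x. \<bar>b x\<bar> \<le> B" "\<And>x. \<bar>w x\<bar> \<le> C"
  shows "(\<integral>z. (a (fst z) - a (snd z)) * (b (fst z) - b (snd z)) * (w (fst z) * w (snd z)) \<partial>(M \<Otimes>\<^sub>M M))
    = 2 * ((\<integral>x. a x * b x * w x \<partial>M) * (\<integral>x. w x \<partial>M) - (\<integral>x. a x * w x \<partial>M) * (\<integral>x. b x * w x \<partial>M))"
proof -
  interpret pair_prob_space M M ..
  have abs_mult_le: "\<bar>s * t\<bar> \<le> S * T" if "\<bar>s\<bar> \<le> S" "\<bar>t\<bar> \<le> T" for s t S T :: real
    using that by (auto simp: abs_mult intro!: mult_mono')
  note abw = abs_mult_le[OF abs_mult_le[OF bounds(1,2)] bounds(3)]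
    and aw = abs_mult_le[OF bounds(1,3)] and bw = abs_mult_le[OF bounds(2,3)]
  define F1 where "F1 z = (a (fst z) * b (fst z) * w (fst z)) * w (snd z)" for z
  define F2 where "F2 z = (a (fst z) * w (fst z)) * (b (snd z) * w (snd z))" for z
  define F3 where "F3 z = (b (fst z) * w (fst z)) * (a (snd z) * w (snd z))" for z
  define F4 where "F4 z = w (fst z) * (a (snd z) * b (snd z) * w (snd z))" for z
  note F_defs = F1_def[abs_def] F2_def[abs_def] F3_def[abs_def] F4_def[abs_def]
  have "integrable (M \<Otimes>\<^sub>M M) F1" "integrable (M \<Otimes>\<^sub>M M) F2"
    "integrable (M \<Otimes>\<^sub>M M) F3" "integrable (M \<Otimes>\<^sub>M M) F4"
    unfolding F_defs
    by (rule integrable_fst_mult_snd[OF _ _ abw bounds(3)] integrable_fst_mult_snd[OF _ _ aw bw]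
        integrable_fst_mult_snd[OF _ _ bw aw] integrable_fst_mult_snd[OF _ _ bounds(3) abw]; simp)+
  moreover have "integral\<^sup>L (M \<Otimes>\<^sub>M M) F1 = (\<integral>x. a x * b x * w x \<partial>M) * (\<integral>x. w x \<partial>M)"
    "integral\<^sup>L (M \<Otimes>\<^sub>M M) F2 = (\<integral>x. a x * w x \<partial>M) * (\<integral>x. b x * w x \<partial>M)"
    "integral\<^sup>L (M \<Otimes>\<^sub>M M) F3 = (\<integral>x. b x * w x \<partial>M) * (\<integral>x. a x * w x \<partial>M)"
    "integral\<^sup>L (M \<Otimes>\<^sub>M M) F4 = (\<integral>x. w x \<partial>M) * (\<integral>x. a x * b x * w x \<partial>M)"
    unfolding F_defs
    by (rule integral_fst_mult_snd[OF _ _ abw bounds(3)] integral_fst_mult_snd[OF _ _ aw bw]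
        integral_fst_mult_snd[OF _ _ bw aw] integral_fst_mult_snd[OF _ _ bounds(3) abw]; simp)+
  moreover have "(\<lambda>z. (a (fst z) - a (snd z)) * (b (fst z) - b (snd z)) * (w (fst z) * w (snd z)))
    = (\<lambda>z. F1 z - F2 z - F3 z + F4 z)"
    by (auto simp: F1_def F2_def F3_def F4_def algebra_simps)
  ultimately show ?thesis by simp
qed

text \<open>A truncation of exp a - exp b = exp ((a + b)/2) (exp ((a - b)/2) - exp (- (a - b)/2))
  in which both factors are power series with nonnegative coefficients.\<close>
definition exp_diff_partial :: "nat \<Rightarrow> real \<Rightarrow> real \<Rightarrow> real" where
  "exp_diff_partial N a b
    = exp_partial N ((a + b) / 2) * (exp_partial N ((a - b) / 2) - exp_partial N (- ((a - b) / 2)))"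

lemma exp_diff_partial_tendsto: "(\<lambda>N. exp_diff_partial N a b) \<longlonglongrightarrow> exp a - exp b"
proof -
  have "exp ((a + b) / 2) * (exp ((a - b) / 2) - exp (- ((a - b) / 2))) = exp a - exp b"
    by (simp add: right_diff_distrib add_divide_distrib diff_divide_distrib flip: exp_add)
  moreover have "(\<lambda>N. exp_diff_partial N a b)
      \<longlonglongrightarrow> exp ((a + b) / 2) * (exp ((a - b) / 2) - exp (- ((a - b) / 2)))"
    unfolding exp_diff_partial_def by (intro tendsto_intros exp_partial_tendsto)
  ultimately show ?thesis by simp
qed

lemma abs_exp_diff_partial_le:
  assumes "\<bar>a\<bar> \<le> B" "\<bar>b\<bar> \<le> B"
  shows "\<bar>exp_diff_partial N a b\<bar> \<le> exp B * (2 * exp B)"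
proof -
  have bound: "\<bar>exp_partial N y\<bar> \<le> exp B" if "\<bar>y\<bar> \<le> B" for y
    using abs_exp_partial_le[of N y] that by (meson exp_le_cancel_iff order_trans)
  have "\<bar>(a + b) / 2\<bar> \<le> B" "\<bar>(a - b) / 2\<bar> \<le> B" "\<bar>- ((a - b) / 2)\<bar> \<le> B"
    using assms by (auto simp: abs_le_iff)
  note bounds = this[THEN bound]
  have "\<bar>exp_partial N ((a - b) / 2) - exp_partial N (- ((a - b) / 2))\<bar> \<le> 2 * exp B"
    using abs_triangle_ineq4[of "exp_partial N ((a - b) / 2)" "exp_partial N (- ((a - b) / 2))"] bounds(2,3)
    by linarith
  with bounds(1) show ?thesis
    unfolding exp_diff_partial_def abs_mult by (intro mult_mono) auto
qed

lemma ginibre_cone_exp_diff_partial: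
  assumes "Q \<in> cos_poly I"
  shows "(\<lambda>z. exp_diff_partial N (Q (fst z)) (Q (snd z))) \<in> ginibre_cone I"
proof -
  have "(\<lambda>z. (Q (fst z) + Q (snd z)) / 2) \<in> ginibre_cone I" "(\<lambda>z. (Q (fst z) - Q (snd z)) / 2) \<in> ginibre_cone I"
    using ginibre_cone_scale[of "1/2", OF _ cos_poly_doubled_in_ginibre_cone[OF assms, of 1]]
      ginibre_cone_scale[of "1/2", OF _ cos_poly_doubled_in_ginibre_cone[OF assms, of "-1"]]
    by simp_all
  then show ?thesis
    unfolding exp_diff_partial_def
    by (intro ginibre_cone_mult ginibre_cone_exp_partial ginibre_cone_exp_partial_odd)
qed

lemma ginibre_pair_integral_nonneg:
  assumes "finite I" and g: "g \<in> cos_poly I" and P: "P \<in> cos_poly I" and Q: "Q \<in> cos_poly I"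
  shows "0 \<le> (\<integral>z. (g (fst z) - g (snd z)) * (exp (Q (fst z)) - exp (Q (snd z)))
                   * (exp (P (fst z)) * exp (P (snd z))) \<partial>torus2 I)"
proof -
  obtain Bg where Bg: "\<And>\<theta>. \<bar>g \<theta>\<bar> \<le> Bg" using cos_poly_bounded[OF g] by blast
  obtain BP where BP: "\<And>\<theta>. \<bar>P \<theta>\<bar> \<le> BP" using cos_poly_bounded[OF P] by blast
  obtain BQ where BQ: "\<And>\<theta>. \<bar>Q \<theta>\<bar> \<le> BQ" using cos_poly_bounded[OF Q] by blast
  define H where "H N z = (g (fst z) - g (snd z)) * exp_diff_partial N (Q (fst z)) (Q (snd z))
    * exp_partial N (P (fst z) + P (snd z))" for N z
  have H_cone: "H N \<in> ginibre_cone I" for N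
    using cos_poly_doubled_in_ginibre_cone[OF g, of "-1"] cos_poly_doubled_in_ginibre_cone[OF P, of 1]
    unfolding H_def[abs_def]
    by (intro ginibre_cone_mult ginibre_cone_exp_diff_partial[OF Q] ginibre_cone_exp_partial) simp_all
  have "(\<lambda>N. integral\<^sup>L (torus2 I) (H N))
    \<longlonglongrightarrow> (\<integral>z. (g (fst z) - g (snd z)) * (exp (Q (fst z)) - exp (Q (snd z)))
                   * (exp (P (fst z)) * exp (P (snd z))) \<partial>torus2 I)"
  proof (rule integral_dominated_convergence[where w="\<lambda>_. 2 * Bg * (exp BQ * (2 * exp BQ)) * exp (2 * BP)"])
    show "H N \<in> borel_measurable (torus2 I)" for N
      using ginibre_cone_integral_nonneg(1)[OF assms(1) H_cone] by (rule borel_measurable_integrable)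
    show "AE z in torus2 I. (\<lambda>N. H N z) \<longlonglongrightarrow> (g (fst z) - g (snd z)) * (exp (Q (fst z)) - exp (Q (snd z)))
                   * (exp (P (fst z)) * exp (P (snd z)))"
      unfolding H_def exp_add[symmetric] by (intro AE_I2 tendsto_intros exp_diff_partial_tendsto exp_partial_tendsto)
    show "AE z in torus2 I. norm (H N z) \<le> 2 * Bg * (exp BQ * (2 * exp BQ)) * exp (2 * BP)" for N
    proof (intro AE_I2)
      fix z
      have "\<bar>g (fst z) - g (snd z)\<bar> \<le> 2 * Bg" "\<bar>P (fst z) + P (snd z)\<bar> \<le> 2 * BP"
        using Bg[of "fst z"] Bg[of "snd z"] BP[of "fst z"] BP[of "snd z"] by (auto simp: abs_le_iff)
      then show "norm (H N z) \<le> 2 * Bg * (exp BQ * (2 * exp BQ)) * exp (2 * BP)"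
        unfolding H_def real_norm_def abs_mult using abs_exp_diff_partial_le[OF BQ BQ]
        by (intro mult_mono) (auto intro: order_trans[OF abs_exp_partial_le])
    qed
  qed (use cos_poly_measurable[OF g] cos_poly_measurable[OF P] cos_poly_measurable[OF Q]
       in \<open>auto intro: torus2.integrable_const_bound\<close>)
  then show ?thesis
    by (rule LIMSEQ_le_const) (use ginibre_cone_integral_nonneg(2)[OF assms(1) H_cone] in auto)
qed

theorem ginibre_inequality:
  assumes "finite I" and g: "g \<in> cos_poly I" and P: "P \<in> cos_poly I" and Q: "Q \<in> cos_poly I"
  shows "(\<integral>\<theta>. g \<theta> * exp (P \<theta>) \<partial>torus I) * (\<integral>\<theta>. exp (P \<theta> + Q \<theta>) \<partial>torus I)
    \<le> (\<integral>\<theta>. g \<theta> * exp (P \<theta> + Q \<theta>) \<partial>torus I) * (\<integral>\<theta>. exp (P \<theta>) \<partial>torus I)"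
proof -
  note [measurable] = cos_poly_measurable[OF g] cos_poly_measurable[OF P] cos_poly_measurable[OF Q]
  obtain Bg where Bg: "\<And>\<theta>. \<bar>g \<theta>\<bar> \<le> Bg" using cos_poly_bounded[OF g] by blast
  obtain BP where "\<And>\<theta>. \<bar>P \<theta>\<bar> \<le> BP" using cos_poly_bounded[OF P] by blast
  then have BP: "\<bar>exp (P \<theta>)\<bar> \<le> exp BP" for \<theta> by (simp add: abs_le_iff)
  obtain BQ where "\<And>\<theta>. \<bar>Q \<theta>\<bar> \<le> BQ" using cos_poly_bounded[OF Q] by blast
  then have BQ: "\<bar>exp (Q \<theta>)\<bar> \<le> exp BQ" for \<theta> by (simp add: abs_le_iff)
  from torus.P.integral_duplication[where a=g and b="\<lambda>\<theta>. exp (Q \<theta>)" and w="\<lambda>\<theta>. exp (P \<theta>)",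
      OF _ _ _ Bg BQ BP]
  have "(\<integral>z. (g (fst z) - g (snd z)) * (exp (Q (fst z)) - exp (Q (snd z)))
          * (exp (P (fst z)) * exp (P (snd z))) \<partial>torus2 I)
    = 2 * ((\<integral>\<theta>. g \<theta> * exp (P \<theta> + Q \<theta>) \<partial>torus I) * (\<integral>\<theta>. exp (P \<theta>) \<partial>torus I)
         - (\<integral>\<theta>. g \<theta> * exp (P \<theta>) \<partial>torus I) * (\<integral>\<theta>. exp (P \<theta> + Q \<theta>) \<partial>torus I))"
    by (simp add: exp_add ac_simps)
  with ginibre_pair_integral_nonneg[OF assms] show ?thesis by simp
qed

section \<open>The dilute XY model\<close>

definition bond_sum :: "nat \<Rightarrow> ('d::finite \<Rightarrow> int) set \<Rightarrow> (('d \<Rightarrow> int) \<Rightarrow> ('d \<Rightarrow> int) \<Rightarrow> real)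
    \<Rightarrow> (('d \<Rightarrow> int) \<Rightarrow> real) \<Rightarrow> real" where
  "bond_sum n \<Lambda> \<kappa> \<theta> = (\<Sum>x\<in>\<Lambda>. \<Sum>y\<in>\<Lambda>. if adj_n n x y then \<kappa> x y * cos (\<theta> x - \<theta> y) else 0)"

definition coupling :: "nat \<Rightarrow> real \<Rightarrow> real \<Rightarrow> (('d::finite \<Rightarrow> int) \<Rightarrow> real)
    \<Rightarrow> ('d \<Rightarrow> int) \<Rightarrow> ('d \<Rightarrow> int) \<Rightarrow> real" where
  "coupling n \<beta>1 \<beta>2 r x y = (if x \<in> Zd_vert n \<or> y \<in> Zd_vert n then \<beta>1 else \<beta>2) * r x * r y / 2"

lemma neg_hamiltonian_eq_bond_sum: "- hamiltonian n \<Lambda> \<beta>1 \<beta>2 r \<theta> = bond_sum n \<Lambda> (coupling n \<beta>1 \<beta>2 r) \<theta>"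
  unfolding hamiltonian_def bond_sum_def coupling_def sum_distrib_left
  by (simp flip: sum_negf) (intro sum.cong refl, simp)

lemma bond_sum_add: "bond_sum n \<Lambda> \<kappa> \<theta> + bond_sum n \<Lambda> \<kappa>' \<theta> = bond_sum n \<Lambda> (\<lambda>x y. \<kappa> x y + \<kappa>' x y) \<theta>"
  unfolding bond_sum_def sum.distrib[symmetric] by (intro sum.cong refl) (auto simp: distrib_right)

lemma lin_form_indicator_diff:
  assumes "finite I" "x \<in> I" "y \<in> I"
  shows "lin_form I (\<lambda>z. of_bool (z = x) - of_bool (z = y)) \<theta> = \<theta> x - \<theta> y"
proof -
  have "lin_form I (\<lambda>z. of_bool (z = w)) \<theta> = \<theta> w" if "w \<in> I" for w
  proof -
    have "lin_form I (\<lambda>z. of_bool (z = w)) \<theta> = (\<Sum>z\<in>I. if z = w then \<theta> z else 0)"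
      unfolding lin_form_def by (intro sum.cong refl) simp
    then show ?thesis using assms(1) that by simp
  qed
  then show ?thesis using assms by (simp add: lin_form_diff)
qed

lemma bond_sum_cos_poly:
  assumes "finite \<Lambda>" "\<And>x y. x \<in> \<Lambda> \<Longrightarrow> y \<in> \<Lambda> \<Longrightarrow> adj_n n x y \<Longrightarrow> 0 \<le> \<kappa> x y"
  shows "bond_sum n \<Lambda> \<kappa> \<in> cos_poly \<Lambda>"
  unfolding bond_sum_def[abs_def]
proof (intro cos_poly_sum assms(1))
  fix x y assume xy: "x \<in> \<Lambda>" "y \<in> \<Lambda>"
  have "(\<lambda>\<theta>. \<kappa> x y * cos (lin_form \<Lambda> (\<lambda>z. of_bool (z = x) - of_bool (z = y)) \<theta>)) \<in> cos_poly \<Lambda>"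
    if "adj_n n x y" using assms(2)[OF xy that] by (rule cos_poly_cos)
  then show "(\<lambda>\<theta>. if adj_n n x y then \<kappa> x y * cos (\<theta> x - \<theta> y) else 0) \<in> cos_poly \<Lambda>"
    by (cases "adj_n n x y") (simp_all add: lin_form_indicator_diff[OF assms(1) xy] cos_poly_zero)
qed

lemma neg_hamiltonian_cos_poly:
  assumes "finite \<Lambda>" "0 \<le> \<beta>1" "0 \<le> \<beta>2" "\<forall>x\<in>\<Lambda>. 0 \<le> r x"
  shows "(\<lambda>\<theta>. - hamiltonian n \<Lambda> \<beta>1 \<beta>2 r \<theta>) \<in> cos_poly \<Lambda>"
  unfolding neg_hamiltonian_eq_bond_sum using assms
  by (intro bond_sum_cos_poly[unfolded fun_eq_iff]) (auto simp: coupling_def)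

lemma angle_measure_eq_torus: "angle_measure \<Lambda> = torus \<Lambda>"
  unfolding angle_measure_def angle_unif_def ..

lemma mdot_eq_lin_form: "mdot \<Lambda> m = lin_form \<Lambda> m"
  unfolding mdot_def[abs_def] lin_form_def[abs_def] ..

lemma integrable_mult_exp_cos_poly:
  assumes "g \<in> cos_poly I" "P \<in> cos_poly I"
  shows "integrable (torus I) (\<lambda>\<theta>. g \<theta> * exp (P \<theta>))"
proof -
  note [measurable] = cos_poly_measurable[OF assms(1)] cos_poly_measurable[OF assms(2)]
  obtain Bg BP where "\<And>\<theta>. \<bar>g \<theta>\<bar> \<le> Bg" "\<And>\<theta>. \<bar>P \<theta>\<bar> \<le> BP"
    using cos_poly_bounded[OF assms(1)] cos_poly_bounded[OF assms(2)] by blast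
  then have "\<bar>g \<theta> * exp (P \<theta>)\<bar> \<le> Bg * exp BP" for \<theta>
    by (auto simp: abs_mult abs_le_iff intro!: mult_mono')
  then show ?thesis by (intro torus.P.integrable_const_bound[where B="Bg * exp BP"]) auto
qed

lemma integrable_exp_cos_poly: "P \<in> cos_poly I \<Longrightarrow> integrable (torus I) (\<lambda>\<theta>. exp (P \<theta>))"
  using integrable_mult_exp_cos_poly[OF cos_poly_cos[of 1 I "\<lambda>_. 0"]] by simp

lemma integral_exp_cos_poly_pos:
  assumes "P \<in> cos_poly I"
  shows "0 < (\<integral>\<theta>. exp (P \<theta>) \<partial>torus I)"
proof -
  obtain B where "\<And>\<theta>. \<bar>P \<theta>\<bar> \<le> B" using cos_poly_bounded[OF assms] by blast
  then have B: "- B \<le> P \<theta>" for \<theta> by (metis abs_le_iff minus_le_iff)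
  have "exp (- B) = (\<integral>\<theta>. exp (- B) \<partial>torus I)" by (simp add: torus.P.prob_space)
  also have "\<dots> \<le> (\<integral>\<theta>. exp (P \<theta>) \<partial>torus I)"
    using B by (intro integral_mono integrable_exp_cos_poly[OF assms]) auto
  finally show ?thesis by (rule less_le_trans[OF exp_gt_zero])
qed

definition partition_fun ::
    "nat \<Rightarrow> ('d::finite \<Rightarrow> int) set \<Rightarrow> real \<Rightarrow> real \<Rightarrow> (('d \<Rightarrow> int) \<Rightarrow> real) \<Rightarrow> real" where
  "partition_fun n \<Lambda> \<beta>1 \<beta>2 r = (\<integral>\<theta>. exp (- hamiltonian n \<Lambda> \<beta>1 \<beta>2 r \<theta>) \<partial>angle_measure \<Lambda>)"

lemma partition_fun_pos:
  assumes "finite \<Lambda>" "0 \<le> \<beta>1" "0 \<le> \<beta>2" "\<forall>x\<in>\<Lambda>. 0 \<le> r x"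
  shows "0 < partition_fun n \<Lambda> \<beta>1 \<beta>2 r"
  unfolding partition_fun_def angle_measure_eq_torus
  by (rule integral_exp_cos_poly_pos[OF neg_hamiltonian_cos_poly[OF assms]])

lemma quenched_avg_mono:
  assumes "finite \<Lambda>" "0 \<le> \<beta>1" "0 \<le> \<beta>2" "g \<in> cos_poly \<Lambda>"
    and r: "\<forall>x\<in>\<Lambda>. 0 \<le> r x \<and> r x \<le> r' x"
  shows "quenched_avg n \<Lambda> \<beta>1 \<beta>2 r g \<le> quenched_avg n \<Lambda> \<beta>1 \<beta>2 r' g"
proof -
  define P where "P \<theta> = - hamiltonian n \<Lambda> \<beta>1 \<beta>2 r \<theta>" for \<theta>
  define Q where "Q = bond_sum n \<Lambda> (\<lambda>x y. coupling n \<beta>1 \<beta>2 r' x y - coupling n \<beta>1 \<beta>2 r x y)"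
  have r': "\<forall>x\<in>\<Lambda>. 0 \<le> r' x" using r by force
  have P: "P \<in> cos_poly \<Lambda>" unfolding P_def[abs_def] using assms r by (intro neg_hamiltonian_cos_poly) auto
  have "coupling n \<beta>1 \<beta>2 r x y \<le> coupling n \<beta>1 \<beta>2 r' x y" if "x \<in> \<Lambda>" "y \<in> \<Lambda>" for x y
    using r that assms(2,3) unfolding coupling_def by (auto simp: mult.assoc intro!: mult_left_mono mult_mono)
  then have Q: "Q \<in> cos_poly \<Lambda>" unfolding Q_def using assms(1) by (intro bond_sum_cos_poly) auto
  have PQ: "- hamiltonian n \<Lambda> \<beta>1 \<beta>2 r' \<theta> = P \<theta> + Q \<theta>" for \<theta>
    unfolding P_def Q_def neg_hamiltonian_eq_bond_sum bond_sum_add by simp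
  have "(\<integral>\<theta>. g \<theta> * exp (P \<theta>) \<partial>torus \<Lambda>) / (\<integral>\<theta>. exp (P \<theta>) \<partial>torus \<Lambda>)
      \<le> (\<integral>\<theta>. g \<theta> * exp (P \<theta> + Q \<theta>) \<partial>torus \<Lambda>) / (\<integral>\<theta>. exp (P \<theta> + Q \<theta>) \<partial>torus \<Lambda>)"
    using ginibre_inequality[OF assms(1,4) P Q] integral_exp_cos_poly_pos[OF P]
      integral_exp_cos_poly_pos[OF cos_poly_add[OF P Q]]
    by (simp add: divide_simps)
  then show ?thesis
    unfolding quenched_avg_def angle_measure_eq_torus PQ by (simp add: P_def)
qed

lemma adj_n_sym: "adj_n n x y \<longleftrightarrow> adj_n n y x"
  unfolding adj_n_def by (auto simp: abs_minus_commute)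

lemma adj_n_irrefl: "\<not> adj_n n x x"
  unfolding adj_n_def by simp

lemma l1_unit_step:
  fixes x y :: "'d::finite \<Rightarrow> int"
  assumes sum: "(\<Sum>i\<in>UNIV. \<bar>x i - y i\<bar>) = 1"
  shows "\<exists>i s. s \<in> {1, -1} \<and> y = x(i := x i + s)"
proof -
  obtain i where i: "x i \<noteq> y i" using sum by force
  have "(\<Sum>j\<in>UNIV. \<bar>x j - y j\<bar>) = \<bar>x i - y i\<bar> + (\<Sum>j\<in>UNIV - {i}. \<bar>x j - y j\<bar>)"
    by (rule sum.remove) auto
  moreover have "0 \<le> (\<Sum>j\<in>UNIV - {i}. \<bar>x j - y j\<bar>)" by (rule sum_nonneg) auto
  ultimately have step: "\<bar>x i - y i\<bar> = 1" and rest: "(\<Sum>j\<in>UNIV - {i}. \<bar>x j - y j\<bar>) = 0"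
    using sum i by linarith+
  have "y j = x j" if "j \<noteq> i" for j
    using rest that by (subst (asm) sum_nonneg_eq_0_iff) auto
  then have "y = x(i := x i + (y i - x i))" by (auto simp: fun_eq_iff)
  moreover have "y i - x i \<in> {1, -1}" using step by (auto simp: abs_if split: if_splits)
  ultimately show ?thesis by blast
qed

lemma adj_n_unit_steps: "{y. adj_n n x y} \<subseteq> (\<lambda>(i, s). x(i := x i + s)) ` (UNIV \<times> {1, -1})"
  using l1_unit_step unfolding adj_n_def by fastforce

lemma finite_adj_n: "finite {y. adj_n n x y}"
  by (rule finite_subset[OF adj_n_unit_steps]) auto

lemma card_adj_n_le:
  fixes x :: "'d::finite \<Rightarrow> int"
  shows "card {y. adj_n n x y} \<le> 2 * CARD('d)"
proof -
  have "card {y. adj_n n x y} \<le> card ((\<lambda>(i, s). x(i := x i + s)) ` ((UNIV :: 'd set) \<times> {1 :: int, -1}))"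
    by (intro card_mono adj_n_unit_steps) auto
  also have "\<dots> \<le> card ((UNIV :: 'd set) \<times> {1 :: int, -1})"
    by (intro card_image_le) auto
  also have "\<dots> = 2 * CARD('d)" by (simp add: card_cartesian_product)
  finally show ?thesis .
qed

lemma sum_sum_supported_at:
  assumes "finite A" "x \<in> A" "\<And>a b. a \<noteq> x \<Longrightarrow> b \<noteq> x \<Longrightarrow> f a b = 0" "f x x = 0"
  shows "(\<Sum>a\<in>A. \<Sum>b\<in>A. f a b) = (\<Sum>b\<in>A. f x b) + (\<Sum>a\<in>A. f a x)"
proof -
  have "(\<Sum>b\<in>A. f a b) = f a x" if "a \<noteq> x" for a
    using sum.remove[OF assms(1,2), of "f a"] assms(3)[OF that] by simp
  then have "(\<Sum>a\<in>A - {x}. \<Sum>b\<in>A. f a b) = (\<Sum>a\<in>A - {x}. f a x)" by simp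
  then show ?thesis
    using sum.remove[OF assms(1,2), of "\<lambda>a. \<Sum>b\<in>A. f a b"] sum.remove[OF assms(1,2), of "\<lambda>a. f a x"] assms(4)
    by simp
qed

lemma coupling_add_site_le:
  assumes "0 \<le> \<beta>1" "x \<in> Zd_vert n" "r x = 0" "b \<noteq> x" "0 \<le> r b" "r b \<le> 1"
  shows "(coupling n \<beta>1 \<beta>2 (r(x := 1)) x b - coupling n \<beta>1 \<beta>2 r x b) * cos t \<le> \<beta>1 / 2"
    and "(coupling n \<beta>1 \<beta>2 (r(x := 1)) b x - coupling n \<beta>1 \<beta>2 r b x) * cos t \<le> \<beta>1 / 2"
proof -
  have \<delta>: "coupling n \<beta>1 \<beta>2 (r(x := 1)) x b - coupling n \<beta>1 \<beta>2 r x b = \<beta>1 * r b / 2"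
    "coupling n \<beta>1 \<beta>2 (r(x := 1)) b x - coupling n \<beta>1 \<beta>2 r b x = \<beta>1 * r b / 2"
    using assms(2-4) by (auto simp: coupling_def)
  have "\<beta>1 * r b / 2 * cos t \<le> \<beta>1 * r b / 2" "\<beta>1 * r b \<le> \<beta>1"
    using assms(1,5,6) by (simp_all add: mult_left_le)
  then show "(coupling n \<beta>1 \<beta>2 (r(x := 1)) x b - coupling n \<beta>1 \<beta>2 r x b) * cos t \<le> \<beta>1 / 2"
    "(coupling n \<beta>1 \<beta>2 (r(x := 1)) b x - coupling n \<beta>1 \<beta>2 r b x) * cos t \<le> \<beta>1 / 2"
    unfolding \<delta> by linarith+
qed

text \<open>Only the bonds at x change, each raising - H by at most \<beta>1 (it occurs twice in the ordered
  double sum), and x has at most 2d neighbours.\<close>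
lemma neg_hamiltonian_add_site_le:
  fixes r :: "('d::finite \<Rightarrow> int) \<Rightarrow> real"
  assumes "finite \<Lambda>" "0 \<le> \<beta>1" "x \<in> \<Lambda>" "x \<in> Zd_vert n" "r x = 0"
    and r: "\<forall>y\<in>\<Lambda>. 0 \<le> r y \<and> r y \<le> 1"
  shows "- hamiltonian n \<Lambda> \<beta>1 \<beta>2 (r(x := 1)) \<theta> \<le> - hamiltonian n \<Lambda> \<beta>1 \<beta>2 r \<theta> + 2 * real CARD('d) * \<beta>1"
proof -
  define f where "f a b = (if adj_n n a b then (coupling n \<beta>1 \<beta>2 (r(x := 1)) a b - coupling n \<beta>1 \<beta>2 r a b)
    * cos (\<theta> a - \<theta> b) else 0)" for a b
  define deg where "deg = card {b\<in>\<Lambda>. adj_n n x b}"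
  have "- hamiltonian n \<Lambda> \<beta>1 \<beta>2 (r(x := 1)) \<theta> = - hamiltonian n \<Lambda> \<beta>1 \<beta>2 r \<theta> + (\<Sum>a\<in>\<Lambda>. \<Sum>b\<in>\<Lambda>. f a b)"
    unfolding neg_hamiltonian_eq_bond_sum f_def bond_sum_def sum.distrib[symmetric]
    by (intro sum.cong refl) (auto simp: algebra_simps)
  also have "(\<Sum>a\<in>\<Lambda>. \<Sum>b\<in>\<Lambda>. f a b) = (\<Sum>b\<in>\<Lambda>. f x b) + (\<Sum>a\<in>\<Lambda>. f a x)"
    using assms(1,3) by (rule sum_sum_supported_at) (auto simp: f_def coupling_def adj_n_irrefl)
  also have "\<dots> \<le> (\<Sum>b\<in>\<Lambda>. if adj_n n x b then \<beta>1 / 2 else 0) + (\<Sum>a\<in>\<Lambda>. if adj_n n x a then \<beta>1 / 2 else 0)"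
  proof (intro add_mono sum_mono)
    fix b assume b: "b \<in> \<Lambda>"
    have "f x b \<le> (if adj_n n x b then \<beta>1 / 2 else 0) \<and> f b x \<le> (if adj_n n x b then \<beta>1 / 2 else 0)"
    proof (cases "adj_n n x b")
      case True
      then have "b \<noteq> x" using adj_n_irrefl by metis
      moreover have "0 \<le> r b" "r b \<le> 1" using r b by auto
      ultimately show ?thesis
        using True coupling_add_site_le[of \<beta>1 x n r b, OF assms(2,4,5)] adj_n_sym[of n b x]
        by (simp add: f_def)
    qed (simp add: f_def adj_n_sym[of n b x])
    then show "f x b \<le> (if adj_n n x b then \<beta>1 / 2 else 0)" "f b x \<le> (if adj_n n x b then \<beta>1 / 2 else 0)"
      by simp_all
  qed
  also have "\<dots> = \<beta>1 * deg"
    unfolding deg_def using sum.inter_filter[OF assms(1), of "\<lambda>_. \<beta>1 / 2" "adj_n n x"]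
    by (simp add: mult.commute)
  also have "\<dots> \<le> \<beta>1 * (2 * CARD('d))"
  proof -
    have "deg \<le> card {y. adj_n n x y}" unfolding deg_def by (rule card_mono[OF finite_adj_n]) auto
    with card_adj_n_le[of n x] assms(2) show ?thesis by (intro mult_left_mono) auto
  qed
  finally show ?thesis by (simp add: mult_ac fun_upd_def)
qed

lemma partition_fun_add_site_le:
  fixes r :: "('d::finite \<Rightarrow> int) \<Rightarrow> real"
  assumes "finite \<Lambda>" "0 \<le> \<beta>1" "0 \<le> \<beta>2" "x \<in> \<Lambda>" "x \<in> Zd_vert n" "r x = 0"
    and r: "\<forall>y\<in>\<Lambda>. 0 \<le> r y \<and> r y \<le> 1"
  shows "partition_fun n \<Lambda> \<beta>1 \<beta>2 (r(x := 1)) \<le> exp (2 * real CARD('d) * \<beta>1) * partition_fun n \<Lambda> \<beta>1 \<beta>2 r"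
proof -
  have "\<forall>y\<in>\<Lambda>. 0 \<le> (r(x := 1)) y" "\<forall>y\<in>\<Lambda>. 0 \<le> r y" using r by auto
  note H = this[THEN neg_hamiltonian_cos_poly[OF assms(1-3)], THEN integrable_exp_cos_poly]
  have "partition_fun n \<Lambda> \<beta>1 \<beta>2 (r(x := 1))
      \<le> (\<integral>\<theta>. exp (- hamiltonian n \<Lambda> \<beta>1 \<beta>2 r \<theta>) * exp (2 * real CARD('d) * \<beta>1) \<partial>torus \<Lambda>)"
    unfolding partition_fun_def angle_measure_eq_torus
    using neg_hamiltonian_add_site_le[OF assms(1,2,4-6) r]
    by (intro integral_mono H integrable_mult_left) (simp add: exp_add[symmetric])
  then show ?thesis
    unfolding partition_fun_def angle_measure_eq_torus by (simp add: mult.commute)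
qed

section \<open>Domination by a Bernoulli product measure\<close>

definition dil_configs :: "'a set \<Rightarrow> 'a set \<Rightarrow> ('a \<Rightarrow> real) set" where
  "dil_configs \<Lambda> W = PiE \<Lambda> (\<lambda>x. if x \<in> W then {0, 1} else {1})"

definition bernoulli_weight :: "'a set \<Rightarrow> real \<Rightarrow> ('a \<Rightarrow> real) \<Rightarrow> real" where
  "bernoulli_weight W p r = (\<Prod>x\<in>W. if r x = 1 then p else 1 - p)"

lemma dil_configs_empty: "dil_configs \<Lambda> {} = {\<lambda>x\<in>\<Lambda>. 1}"
proof -
  have "dil_configs \<Lambda> {} = PiE \<Lambda> (\<lambda>x. {(\<lambda>x\<in>\<Lambda>. (1::real)) x})"
    unfolding dil_configs_def by (rule PiE_cong) auto
  also have "\<dots> = {\<lambda>x\<in>\<Lambda>. 1}" by (intro PiE_singleton restrict_extensional)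
  finally show ?thesis .
qed

lemma finite_dil_configs: "finite \<Lambda> \<Longrightarrow> finite (dil_configs \<Lambda> W)"
  unfolding dil_configs_def by (rule finite_PiE) auto

lemma dil_configs_values: "r \<in> dil_configs \<Lambda> W \<Longrightarrow> y \<in> \<Lambda> \<Longrightarrow> r y = 0 \<or> r y = 1"
  unfolding dil_configs_def by (auto simp: PiE_iff split: if_split_asm)

lemma dil_configs_outside: "r \<in> dil_configs \<Lambda> W \<Longrightarrow> x \<in> \<Lambda> \<Longrightarrow> x \<notin> W \<Longrightarrow> r x = 1"
  unfolding dil_configs_def by (auto simp: PiE_iff)

lemma dil_configs_insert:
  assumes "x \<in> \<Lambda>" "x \<notin> W"
  shows "dil_configs \<Lambda> (insert x W) = dil_configs \<Lambda> W \<union> (\<lambda>s. s(x := 0)) ` dil_configs \<Lambda> W"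
    and "dil_configs \<Lambda> W \<inter> (\<lambda>s. s(x := 0)) ` dil_configs \<Lambda> W = {}"
    and "inj_on (\<lambda>s. s(x := 0)) (dil_configs \<Lambda> W)"
proof -
  have sx: "s x = 1" if "s \<in> dil_configs \<Lambda> W" for s
    using dil_configs_outside[OF that assms] .
  show "dil_configs \<Lambda> (insert x W) = dil_configs \<Lambda> W \<union> (\<lambda>s. s(x := 0)) ` dil_configs \<Lambda> W"
  proof (intro equalityI subsetI)
    fix r assume r: "r \<in> dil_configs \<Lambda> (insert x W)"
    show "r \<in> dil_configs \<Lambda> W \<union> (\<lambda>s. s(x := 0)) ` dil_configs \<Lambda> W"
    proof (cases "r x = 1")
      case True
      then show ?thesis using r assms unfolding dil_configs_def by (force simp: PiE_iff split: if_split_asm)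
    next
      case False
      then have "r x = 0" using r assms(1) unfolding dil_configs_def by (auto simp: PiE_iff)
      then have "r = (r(x := 1))(x := 0)" by auto
      moreover have "r(x := 1) \<in> dil_configs \<Lambda> W"
        using r assms unfolding dil_configs_def by (auto simp: PiE_iff extensional_def)
      ultimately show ?thesis by blast
    qed
  qed (use assms in \<open>force simp: dil_configs_def PiE_iff extensional_def split: if_split_asm\<close>)
  show "dil_configs \<Lambda> W \<inter> (\<lambda>s. s(x := 0)) ` dil_configs \<Lambda> W = {}"
    using sx by force
  show "inj_on (\<lambda>s. s(x := 0)) (dil_configs \<Lambda> W)"
    using sx by (intro inj_onI) (metis fun_upd_triv fun_upd_upd)
qed

lemma sum_dil_configs_insert:
  assumes "finite \<Lambda>" "x \<in> \<Lambda>" "x \<notin> W"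
  shows "(\<Sum>r\<in>dil_configs \<Lambda> (insert x W). F r) = (\<Sum>s\<in>dil_configs \<Lambda> W. F s + F (s(x := 0)))"
  unfolding dil_configs_insert(1)[OF assms(2,3)] sum.distrib
  by (subst sum.union_disjoint)
     (auto simp: finite_dil_configs[OF assms(1)] dil_configs_insert(2,3)[OF assms(2,3)] sum.reindex)

lemma bernoulli_weight_insert:
  assumes "finite W" "x \<notin> W"
  shows "bernoulli_weight (insert x W) p r = (if r x = 1 then p else 1 - p) * bernoulli_weight W p r"
    and "bernoulli_weight W p (r(x := v)) = bernoulli_weight W p r"
  unfolding bernoulli_weight_def using assms by (auto intro!: prod.cong)

lemma two_point_domination:
  fixes p \<nu>1 \<nu>0 c1 c0 :: real
  assumes "c0 \<le> c1" "(1 - p) * \<nu>1 \<le> p * \<nu>0"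
  shows "\<nu>1 * c1 + \<nu>0 * c0 \<le> (\<nu>1 + \<nu>0) * (p * c1 + (1 - p) * c0)"
proof -
  have "(\<nu>1 + \<nu>0) * (p * c1 + (1 - p) * c0) - (\<nu>1 * c1 + \<nu>0 * c0) = (c1 - c0) * (p * \<nu>0 - (1 - p) * \<nu>1)"
    by (simp add: algebra_simps)
  moreover have "0 \<le> (c1 - c0) * (p * \<nu>0 - (1 - p) * \<nu>1)" using assms by simp
  ultimately show ?thesis by linarith
qed

text \<open>A Holley-type comparison. Summing out one site at a time preserves both hypotheses.\<close>
lemma bernoulli_domination:
  assumes "finite \<Lambda>" "W \<subseteq> \<Lambda>" "0 \<le> p" "p \<le> 1"
    and "\<And>r. r \<in> dil_configs \<Lambda> W \<Longrightarrow> 0 \<le> \<nu> r"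
    and "\<And>r x. r \<in> dil_configs \<Lambda> W \<Longrightarrow> x \<in> W \<Longrightarrow> r x = 1 \<Longrightarrow> (1 - p) * \<nu> r \<le> p * \<nu> (r(x := 0))"
    and "\<And>r x. r \<in> dil_configs \<Lambda> W \<Longrightarrow> x \<in> W \<Longrightarrow> r x = 1 \<Longrightarrow> c (r(x := 0)) \<le> c r"
  shows "(\<Sum>r\<in>dil_configs \<Lambda> W. \<nu> r * c r)
    \<le> (\<Sum>r\<in>dil_configs \<Lambda> W. \<nu> r) * (\<Sum>r\<in>dil_configs \<Lambda> W. bernoulli_weight W p r * c r)"
proof -
  have "finite W" using assms(1,2) by (rule finite_subset[rotated])
  then show ?thesis using assms(2,5-7)
  proof (induction W arbitrary: \<nu> c rule: finite_induct)
    case empty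
    then show ?case by (simp add: dil_configs_empty bernoulli_weight_def)
  next
    case (insert x W)
    note nonneg = insert.prems(2) and ratio = insert.prems(3) and mono = insert.prems(4)
    let ?C = "dil_configs \<Lambda> (insert x W)" and ?C' = "dil_configs \<Lambda> W"
    have x: "x \<in> \<Lambda>" "x \<notin> W" and W: "W \<subseteq> \<Lambda>" using insert by auto
    have sx: "s x = 1" and in_C: "s \<in> ?C" "s(x := 0) \<in> ?C" if "s \<in> ?C'" for s
      using that dil_configs_outside[OF that x] dil_configs_insert(1)[OF x] by auto
    have twist: "s(x := 0, y := 0) = s(y := 0, x := 0)" if "y \<in> W" for s :: "'a \<Rightarrow> real" and y
      using that x by (auto simp: fun_upd_twist)
    define \<nu>' where "\<nu>' s = \<nu> s + \<nu> (s(x := 0))" for s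
    define c' where "c' s = p * c s + (1 - p) * c (s(x := 0))" for s
    have "(\<Sum>r\<in>?C. \<nu> r * c r) = (\<Sum>s\<in>?C'. \<nu> s * c s + \<nu> (s(x := 0)) * c (s(x := 0)))"
      by (rule sum_dil_configs_insert[OF assms(1) x])
    also have "\<dots> \<le> (\<Sum>s\<in>?C'. \<nu>' s * c' s)"
      unfolding \<nu>'_def c'_def
      by (intro sum_mono two_point_domination mono ratio in_C(1) sx) auto
    also have "\<dots> \<le> (\<Sum>r\<in>?C'. \<nu>' r) * (\<Sum>r\<in>?C'. bernoulli_weight W p r * c' r)"
    proof (rule insert.IH[OF W])
      fix s assume s: "s \<in> ?C'"
      show "0 \<le> \<nu>' s"
        unfolding \<nu>'_def by (intro add_nonneg_nonneg nonneg in_C s)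
    next
      fix s y assume s: "s \<in> ?C'" and y: "y \<in> W" "s y = 1"
      have sy: "(s(x := 0)) y = 1" using x y by auto
      have "(1 - p) * \<nu> s \<le> p * \<nu> (s(y := 0))"
        by (rule ratio[OF in_C(1)[OF s]]) (use y in auto)
      moreover have "(1 - p) * \<nu> (s(x := 0)) \<le> p * \<nu> (s(y := 0, x := 0))"
        using ratio[OF in_C(2)[OF s] insertI2[OF y(1)] sy] unfolding twist[OF y(1)] .
      ultimately show "(1 - p) * \<nu>' s \<le> p * \<nu>' (s(y := 0))"
        unfolding \<nu>'_def by (simp add: distrib_left)
    next
      fix s y assume s: "s \<in> ?C'" and y: "y \<in> W" "s y = 1"
      have sy: "(s(x := 0)) y = 1" using x y by auto
      have "c (s(y := 0)) \<le> c s"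
        by (rule mono[OF in_C(1)[OF s]]) (use y in auto)
      moreover have "c (s(y := 0, x := 0)) \<le> c (s(x := 0))"
        using mono[OF in_C(2)[OF s] insertI2[OF y(1)] sy] unfolding twist[OF y(1)] .
      ultimately show "c' (s(y := 0)) \<le> c' s"
        unfolding c'_def using assms(3,4) by (intro add_mono mult_left_mono) auto
    qed
    also have "(\<Sum>r\<in>?C'. \<nu>' r) = (\<Sum>r\<in>?C. \<nu> r)"
      unfolding \<nu>'_def by (rule sum_dil_configs_insert[OF assms(1) x, symmetric])
    also have "(\<Sum>r\<in>?C'. bernoulli_weight W p r * c' r) = (\<Sum>r\<in>?C. bernoulli_weight (insert x W) p r * c r)"
      unfolding sum_dil_configs_insert[OF assms(1) x] c'_def
      by (intro sum.cong refl) (simp add: bernoulli_weight_insert[OF insert(1,2)] sx algebra_simps)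
    finally show ?case .
  qed
qed

section \<open>Annealed versus quenched correlations\<close>

lemma configs_eq_dil_configs: "configs n \<Lambda> = dil_configs \<Lambda> (\<Lambda> \<inter> Zd_vert n)"
  unfolding configs_def dil_configs_def by (rule PiE_cong) auto

lemma bern_weight_eq_bernoulli_weight: "bern_weight n \<Lambda> p = bernoulli_weight (\<Lambda> \<inter> Zd_vert n) p"
  unfolding bern_weight_def[abs_def] bernoulli_weight_def ..

lemma tilted_bernoulli_parameter:
  fixes pbar c :: real
  assumes "0 < pbar" "pbar < 1"
  defines "p0 \<equiv> pbar / (pbar + (1 - pbar) * exp (- c))"
  shows "(1 - p0) * pbar * exp c = p0 * (1 - pbar)" and "0 \<le> p0" and "p0 \<le> 1"
proof -
  define D where "D = pbar + (1 - pbar) * exp (- c)"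
  have D: "0 < D" "pbar \<le> D" unfolding D_def using assms(1,2) by (simp_all add: add_pos_nonneg)
  have p0: "p0 = pbar / D" unfolding p0_def D_def ..
  have "1 - p0 = (1 - pbar) * exp (- c) / D" unfolding p0 using D(1) by (simp add: field_simps D_def)
  then have "(1 - p0) * pbar * exp c = (1 - pbar) * pbar * (exp (- c) * exp c) / D" by simp
  also have "\<dots> = p0 * (1 - pbar)" by (simp add: p0 exp_minus_inverse[of "- c", simplified])
  finally show "(1 - p0) * pbar * exp c = p0 * (1 - pbar)" .
  show "0 \<le> p0" "p0 \<le> 1" unfolding p0 using D assms(1) by simp_all
qed

lemma configs_values: "r \<in> configs n \<Lambda> \<Longrightarrow> \<forall>y\<in>\<Lambda>. 0 \<le> r y \<and> r y \<le> 1"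
  using dil_configs_values unfolding configs_eq_dil_configs by fastforce

lemma annealed_weight_pos:
  assumes "finite \<Lambda>" "0 \<le> \<beta>1" "0 \<le> \<beta>2" "0 < pbar" "pbar < 1" "r \<in> configs n \<Lambda>"
  shows "0 < bern_weight n \<Lambda> pbar r * partition_fun n \<Lambda> \<beta>1 \<beta>2 r"
  unfolding bern_weight_def using assms configs_values[OF assms(6)]
  by (intro mult_pos_pos prod_pos partition_fun_pos) auto

lemma annealed_avg_eq_weighted_mean:
  assumes "finite \<Lambda>" "0 \<le> \<beta>1" "0 \<le> \<beta>2"
  shows "annealed_avg n \<Lambda> \<beta>1 \<beta>2 pbar g
    = (\<Sum>r\<in>configs n \<Lambda>. bern_weight n \<Lambda> pbar r * partition_fun n \<Lambda> \<beta>1 \<beta>2 r * quenched_avg n \<Lambda> \<beta>1 \<beta>2 r g)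
      / (\<Sum>r\<in>configs n \<Lambda>. bern_weight n \<Lambda> pbar r * partition_fun n \<Lambda> \<beta>1 \<beta>2 r)"
proof -
  have pos: "0 < partition_fun n \<Lambda> \<beta>1 \<beta>2 r" if "r \<in> configs n \<Lambda>" for r
    using assms configs_values[OF that] by (intro partition_fun_pos) auto
  have "bern_weight n \<Lambda> pbar r * (\<integral>\<theta>. g \<theta> * exp (- hamiltonian n \<Lambda> \<beta>1 \<beta>2 r \<theta>) \<partial>angle_measure \<Lambda>)
      = bern_weight n \<Lambda> pbar r * partition_fun n \<Lambda> \<beta>1 \<beta>2 r * quenched_avg n \<Lambda> \<beta>1 \<beta>2 r g"
    if "r \<in> configs n \<Lambda>" for r
    using pos[OF that]
    unfolding quenched_avg_def partition_fun_def[symmetric] by simp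
  then have "(\<Sum>r\<in>configs n \<Lambda>. bern_weight n \<Lambda> pbar r * (\<integral>\<theta>. g \<theta> * exp (- hamiltonian n \<Lambda> \<beta>1 \<beta>2 r \<theta>) \<partial>angle_measure \<Lambda>))
      = (\<Sum>r\<in>configs n \<Lambda>. bern_weight n \<Lambda> pbar r * partition_fun n \<Lambda> \<beta>1 \<beta>2 r * quenched_avg n \<Lambda> \<beta>1 \<beta>2 r g)"
    by (rule sum.cong[OF refl])
  then show ?thesis
    unfolding annealed_avg_def partition_fun_def[symmetric] by simp
qed

lemma annealed_weight_ratio:
  fixes r :: "('d::finite \<Rightarrow> int) \<Rightarrow> real"
  assumes "finite \<Lambda>" "0 \<le> \<beta>1" "0 \<le> \<beta>2" "0 < pbar" "pbar < 1"
    and r: "r \<in> configs n \<Lambda>" and x: "x \<in> \<Lambda>" "x \<in> Zd_vert n" "r x = 1"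
  defines "p0 \<equiv> pbar / (pbar + (1 - pbar) * exp (- 2 * real CARD('d) * \<beta>1))"
  shows "(1 - p0) * (bern_weight n \<Lambda> pbar r * partition_fun n \<Lambda> \<beta>1 \<beta>2 r)
    \<le> p0 * (bern_weight n \<Lambda> pbar (r(x := 0)) * partition_fun n \<Lambda> \<beta>1 \<beta>2 (r(x := 0)))"
proof -
  define W where "W = \<Lambda> \<inter> Zd_vert n - {x}"
  define B where "B = bernoulli_weight W pbar r"
  have W: "finite W" "x \<notin> W" and W_ins: "\<Lambda> \<inter> Zd_vert n = insert x W"
    using assms(1) x unfolding W_def by auto
  have B: "0 \<le> B" unfolding B_def bernoulli_weight_def using assms(4,5) by (intro prod_nonneg) auto
  have bw: "bern_weight n \<Lambda> pbar r = pbar * B" "bern_weight n \<Lambda> pbar (r(x := 0)) = (1 - pbar) * B"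
    unfolding bern_weight_eq_bernoulli_weight W_ins bernoulli_weight_insert[OF W] B_def using x(3) by simp_all
  have "\<forall>y\<in>\<Lambda>. 0 \<le> (r(x := 0)) y \<and> (r(x := 0)) y \<le> 1" using configs_values[OF r] by simp
  from partition_fun_add_site_le[OF assms(1-3) x(1,2), of "r(x := 0)", OF _ this]
  have Z: "partition_fun n \<Lambda> \<beta>1 \<beta>2 r \<le> exp (2 * real CARD('d) * \<beta>1) * partition_fun n \<Lambda> \<beta>1 \<beta>2 (r(x := 0))"
    using x(3) by (simp add: fun_upd_idem)
  note tilt = tilted_bernoulli_parameter[OF assms(4,5), of "2 * real CARD('d) * \<beta>1",
      unfolded mult_minus_left[symmetric], folded p0_def]
  have "(1 - p0) * (pbar * B * partition_fun n \<Lambda> \<beta>1 \<beta>2 r)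
      \<le> (1 - p0) * (pbar * B * (exp (2 * real CARD('d) * \<beta>1) * partition_fun n \<Lambda> \<beta>1 \<beta>2 (r(x := 0))))"
    using Z tilt(3) assms(4) B by (intro mult_left_mono mult_nonneg_nonneg) auto
  also have "\<dots> = ((1 - p0) * pbar * exp (2 * real CARD('d) * \<beta>1)) * (B * partition_fun n \<Lambda> \<beta>1 \<beta>2 (r(x := 0)))"
    by (simp only: mult_ac)
  also have "\<dots> = p0 * ((1 - pbar) * B * partition_fun n \<Lambda> \<beta>1 \<beta>2 (r(x := 0)))"
    unfolding tilt(1) by (simp only: mult_ac)
  finally show ?thesis unfolding bw .
qed

lemma annealed_weight_domination:
  fixes \<Lambda> :: "('d::finite \<Rightarrow> int) set" and n :: nat
  assumes "finite \<Lambda>" "0 \<le> \<beta>1" "0 \<le> \<beta>2" "0 < pbar" "pbar < 1" "g \<in> cos_poly \<Lambda>"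
  defines "p0 \<equiv> pbar / (pbar + (1 - pbar) * exp (- 2 * real CARD('d) * \<beta>1))"
    and "\<nu> \<equiv> \<lambda>r. bern_weight n \<Lambda> pbar r * partition_fun n \<Lambda> \<beta>1 \<beta>2 r"
    and "q \<equiv> \<lambda>r. quenched_avg n \<Lambda> \<beta>1 \<beta>2 r g"
  shows "(\<Sum>r\<in>configs n \<Lambda>. \<nu> r * q r)
    \<le> (\<Sum>r\<in>configs n \<Lambda>. \<nu> r) * (\<Sum>r\<in>configs n \<Lambda>. bern_weight n \<Lambda> p0 r * q r)"
  unfolding configs_eq_dil_configs bern_weight_eq_bernoulli_weight
proof (rule bernoulli_domination[OF assms(1) Int_lower1])
  show "0 \<le> p0" "p0 \<le> 1"
    using tilted_bernoulli_parameter(2,3)[OF assms(4,5), of "2 * real CARD('d) * \<beta>1"] by (simp_all add: p0_def)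
next
  fix r assume "r \<in> dil_configs \<Lambda> (\<Lambda> \<inter> Zd_vert n)"
  then show "0 \<le> \<nu> r"
    unfolding \<nu>_def using annealed_weight_pos[OF assms(1-5)] configs_eq_dil_configs by (metis less_imp_le)
next
  fix r x assume "r \<in> dil_configs \<Lambda> (\<Lambda> \<inter> Zd_vert n)" "x \<in> \<Lambda> \<inter> Zd_vert n" "r x = 1"
  then show "(1 - p0) * \<nu> r \<le> p0 * \<nu> (r(x := 0))"
    unfolding \<nu>_def p0_def using assms(1-5) by (intro annealed_weight_ratio) (auto simp: configs_eq_dil_configs)
next
  fix r x assume "r \<in> dil_configs \<Lambda> (\<Lambda> \<inter> Zd_vert n)" "x \<in> \<Lambda> \<inter> Zd_vert n" "r x = 1"
  then show "q (r(x := 0)) \<le> q r"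
    unfolding q_def using assms(1-3,6) configs_values[of r n \<Lambda>]
    by (intro quenched_avg_mono) (auto simp: configs_eq_dil_configs)
qed

theorem annealed_avg_le_dil_expect:
  fixes \<Lambda> :: "('d::finite \<Rightarrow> int) set"
  assumes "finite \<Lambda>" "0 \<le> \<beta>1" "0 \<le> \<beta>2" "0 < pbar" "pbar < 1" "g \<in> cos_poly \<Lambda>"
  defines "p0 \<equiv> pbar / (pbar + (1 - pbar) * exp (- 2 * real CARD('d) * \<beta>1))"
  shows "annealed_avg n \<Lambda> \<beta>1 \<beta>2 pbar g \<le> dil_expect n \<Lambda> p0 (\<lambda>r. quenched_avg n \<Lambda> \<beta>1 \<beta>2 r g)"
proof -
  let ?\<nu> = "\<lambda>r. bern_weight n \<Lambda> pbar r * partition_fun n \<Lambda> \<beta>1 \<beta>2 r"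
  have "0 < (\<Sum>r\<in>configs n \<Lambda>. ?\<nu> r)"
  proof (rule sum_pos2)
    show "(\<lambda>x\<in>\<Lambda>. 1) \<in> configs n \<Lambda>" unfolding configs_def by auto
    then show "0 < ?\<nu> (\<lambda>x\<in>\<Lambda>. 1)" by (rule annealed_weight_pos[OF assms(1-5)])
  qed (use annealed_weight_pos[OF assms(1-5)] finite_dil_configs[OF assms(1)] in
       \<open>auto simp: configs_eq_dil_configs intro: less_imp_le\<close>)
  with annealed_weight_domination[OF assms(1-6), of n, folded p0_def]
  show ?thesis
    unfolding annealed_avg_eq_weighted_mean[OF assms(1-3)] dil_expect_def
    by (simp add: pos_divide_le_eq mult.commute)
qed

theorem proposition5p1:
  fixes n :: nat and \<beta>1 \<beta>2 pbar :: real
    and \<Lambda> :: "('d::finite \<Rightarrow> int) set" and m :: "('d \<Rightarrow> int) \<Rightarrow> int"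
  assumes "\<beta>1 > 0" and "\<beta>2 > 0" and "0 < pbar" and "pbar < 1"
    and "finite \<Lambda>" and "\<Lambda> \<subseteq> Zdn_vert n"
  shows "let p0 = pbar / (pbar + (1 - pbar) * exp (- 2 * real CARD('d) * \<beta>1)) in
    annealed_avg n \<Lambda> \<beta>1 \<beta>2 pbar (\<lambda>\<theta>. cos (mdot \<Lambda> m \<theta>))
      \<le> dil_expect n \<Lambda> p0 (\<lambda>r. quenched_avg n \<Lambda> \<beta>1 \<beta>2 r (\<lambda>\<theta>. cos (mdot \<Lambda> m \<theta>)))"
proof -
  have "(\<lambda>\<theta>. cos (mdot \<Lambda> m \<theta>)) \<in> cos_poly \<Lambda>"
    using cos_poly_cos[of 1 \<Lambda> m] by (simp add: mdot_eq_lin_form)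
  then show ?thesis
    using annealed_avg_le_dil_expect[OF assms(5) _ _ assms(3,4)] assms(1,2) by (simp add: Let_def)
qed

end
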